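(* Let $\ell=\ell(n)$ be positive integers with $\ell\mid n$ and $\ell=o(n)$. Let $T^*$ be the minimum, over all fitness-dependent mutation rate sequences $(p_0,\dots,p_{n/\ell-1})\in(0,1)^{n/\ell}$, of the expected runtime of the (1+1) EA on $\mathrm{BLO}_\ell$. Then, as $n\to\infty$, \[ T^*=(1+o(1))\,\frac{e}{2}\cdot\frac{b2^\ell}{\ell}\,n^2. \]
   Context: For $\ell\ge1$ let $s(\ell)=\sum_{j=1}^\ell\binom{\ell}{j}\frac1j$ and $b=s(\ell)/2^{\ell+1}$. For $x\in\{0,1\}^n$ with $\ell\mid n$, $\mathrm{BLO}_\ell(x)=\sum_{m=1}^{n/\ell}\prod_{i=1}^{m\ell}x_i$. The (1+1) EA with fitness-dependent rates $(p_m)$: $x_0$ uniform on $\{0,1\}^n$; in each iteration an offspring $y$ is created from the current $x$ by flipping each bit independently with probability $p_{\mathrm{BLO}_\ell(x)}$, and $y$ replaces $x$ iff $\mathrm{BLO}_\ell(y)\ge\mathrm{BLO}_\ell(x)$. The runtime is the number of iterations until the current individual first has fitness $n/\ell$ (zero if $x_0$ already does); its expectation is $\sum_{m=0}^{n/\ell-1}(1-p_m)^{-m\ell}\sum_{j=1}^{\ell}\binom{\ell}{j}\frac{1}{1-(1-2p_m)^j}$. *)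

theory Defs
  imports Complex_Main "HOL-Library.Landau_Symbols"
begin

definition s_BLO :: "nat \<Rightarrow> real" where
  "s_BLO l = (\<Sum>j=1..l. real (l choose j) / real j)"

definition b_BLO :: "nat \<Rightarrow> real" where
  "b_BLO l = s_BLO l / 2 ^ (l + 1)"

definition exp_runtime :: "nat \<Rightarrow> nat \<Rightarrow> (nat \<Rightarrow> real) \<Rightarrow> real" where
  "exp_runtime n l p =
     (\<Sum>m<n div l. inverse ((1 - p m) ^ (m * l)) *
        (\<Sum>j=1..l. real (l choose j) / (1 - (1 - 2 * p m) ^ j)))"

definition T_opt :: "nat \<Rightarrow> nat \<Rightarrow> real" where
  "T_opt n l = Inf {exp_runtime n l p | p. \<forall>m<n div l. 0 < p m \<and> p m < 1}"

end

theory Submission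
  imports Defs
begin

text \<open>At fitness m, rate p contributes the factor \<open>(1 - p)\<^sup>-\<^sup>k\<close> with \<open>k = m l\<close>
  times \<open>\<Sum>\<^sub>j (l choose j) / (1 - (1 - 2p)\<^sup>j)\<close>, and since \<open>1 - (1 - 2p)\<^sup>j \<approx> 2pj\<close> the
  latter is \<open>s(l) / (2p) + O(l s(l))\<close>. Every rate satisfies \<open>e k p (1 - p)\<^sup>k \<le> 1\<close>, so
  level m costs at least \<open>e s(l) k / 2\<close>, while the rate \<open>p = 1 / (k + 2)\<close> achieves
  \<open>e s(l) (k / 2 + l + 1)\<close>. Summing over the \<open>L = n / l\<close> levels, both bounds are
  \<open>e s(l) l L\<^sup>2 / 4 = (e / 2) (b 2\<^sup>l / l) n\<^sup>2\<close> up to a relative error \<open>O(1 / L) = O(l / n)\<close>.\<close>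

lemma one_minus_power_le:
  fixes y :: "'a :: linordered_idom"
  assumes "\<bar>y\<bar> \<le> 1"
  shows "1 - y ^ j \<le> of_nat j * (1 - y)"
proof (induction j)
  case 0
  then show ?case by simp
next
  case (Suc j)
  have "y ^ j \<le> 1"
    using assms by (metis abs_ge_self order.trans power_abs power_le_one abs_ge_zero)
  then have "y ^ j * (1 - y) \<le> 1 * (1 - y)"
    using assms by (intro mult_right_mono) (auto simp: abs_le_iff)
  with Suc show ?case by (simp add: algebra_simps)
qed

lemma power_one_minus_mult_le_one:
  fixes x :: "'a :: linordered_field"
  assumes "0 \<le> x" "x \<le> 1"
  shows "(1 - x) ^ j * (1 + of_nat j * x) \<le> 1"
proof -
  have "(1 - x) ^ j * (1 + of_nat j * x) \<le> (1 - x) ^ j * (1 + x) ^ j"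
    using assms Bernoulli_inequality[of x j] by (intro mult_left_mono) auto
  also have "\<dots> = (1 - x\<^sup>2) ^ j"
    by (simp add: power_mult_distrib[symmetric] power2_eq_square algebra_simps)
  also have "\<dots> \<le> 1"
    using assms by (intro power_le_one) (auto simp: power_le_one)
  finally show ?thesis .
qed

lemma inverse_one_minus_power_le:
  fixes x :: real
  assumes "0 < x" "x \<le> 1" "j \<ge> 1"
  shows "1 / (1 - (1 - x) ^ j) \<le> 1 / (real j * x) + 1"
proof -
  define q where "q = real j * x"
  have q: "0 < q"
    using assms unfolding q_def by simp
  have "(1 - x) ^ j \<le> 1 / (1 + q)"
    using power_one_minus_mult_le_one[of x j] assms add_pos_pos[OF zero_less_one q]
    unfolding q_def by (subst pos_le_divide_eq) auto
  then have lower: "q / (1 + q) \<le> 1 - (1 - x) ^ j"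
    using q by (simp add: field_simps)
  have "0 < q / (1 + q)"
    using q by simp
  with lower have "1 / (1 - (1 - x) ^ j) \<le> 1 / (q / (1 + q))"
    by (intro divide_left_mono mult_pos_pos) auto
  also have "\<dots> = 1 / q + 1"
    using q by (simp add: field_simps)
  finally show ?thesis
    unfolding q_def .
qed

lemma s_BLO_nonneg: "0 \<le> s_BLO l"
  unfolding s_BLO_def by (intro sum_nonneg) auto

lemma s_BLO_ge: "real l \<le> s_BLO l"
proof (cases "l = 0")
  case False
  then have "real (l choose 1) / real 1 \<le> (\<Sum>j=1..l. real (l choose j) / real j)"
    by (intro member_le_sum) auto
  then show ?thesis
    unfolding s_BLO_def by simp
qed (simp add: s_BLO_def)

lemma sum_binomial_le_mult_s_BLO: "(\<Sum>j=1..l. real (l choose j)) \<le> real l * s_BLO l"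
  unfolding s_BLO_def sum_distrib_left
proof (rule sum_mono)
  fix j assume "j \<in> {1..l}"
  then have "1 \<le> real l / real j"
    by simp
  then show "real (l choose j) \<le> real l * (real (l choose j) / real j)"
    using mult_right_mono[of 1 "real l / real j" "real (l choose j)"] by simp
qed

definition block_sum :: "nat \<Rightarrow> real \<Rightarrow> real" where
  "block_sum l p = (\<Sum>j=1..l. real (l choose j) / (1 - (1 - 2 * p) ^ j))"

lemma exp_runtime_eq_block_sum:
  "exp_runtime n l p = (\<Sum>m<n div l. inverse ((1 - p m) ^ (m * l)) * block_sum l (p m))"
  unfolding exp_runtime_def block_sum_def ..

lemma s_BLO_div_le_block_sum:
  assumes "0 < p" "p < 1"
  shows "s_BLO l / (2 * p) \<le> block_sum l p"
  unfolding s_BLO_def block_sum_def sum_divide_distrib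
proof (rule sum_mono)
  fix j assume j: "j \<in> {1..l}"
  have "(1 - 2 * p) ^ j \<le> \<bar>1 - 2 * p\<bar> ^ j"
    by (metis abs_ge_self power_abs)
  also have "\<dots> < 1"
    using assms j by (subst power_less_one_iff) auto
  finally have "0 < 1 - (1 - 2 * p) ^ j"
    by simp
  moreover have "1 - (1 - 2 * p) ^ j \<le> 2 * p * real j"
    using one_minus_power_le[of "1 - 2 * p" j] assms by (simp add: algebra_simps)
  ultimately have "real (l choose j) / (2 * p * real j) \<le> real (l choose j) / (1 - (1 - 2 * p) ^ j)"
    by (intro divide_left_mono) auto
  then show "real (l choose j) / real j / (2 * p) \<le> real (l choose j) / (1 - (1 - 2 * p) ^ j)"
    by (simp add: mult.commute)
qed

lemma block_sum_le:
  assumes "0 < p" "p \<le> 1/2"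
  shows "block_sum l p \<le> s_BLO l * (1 / (2 * p) + real l)"
proof -
  have "block_sum l p \<le> (\<Sum>j=1..l. real (l choose j) * (1 / (real j * (2 * p)) + 1))"
    unfolding block_sum_def
  proof (rule sum_mono)
    fix j assume "j \<in> {1..l}"
    then have inv_le: "1 / (1 - (1 - 2 * p) ^ j) \<le> 1 / (real j * (2 * p)) + 1"
      using inverse_one_minus_power_le[of "2 * p" j] assms by auto
    show "real (l choose j) / (1 - (1 - 2 * p) ^ j) \<le> real (l choose j) * (1 / (real j * (2 * p)) + 1)"
      using mult_left_mono[OF inv_le, of "real (l choose j)"] by simp
  qed
  also have "\<dots> = s_BLO l / (2 * p) + (\<Sum>j=1..l. real (l choose j))"
    unfolding s_BLO_def sum_divide_distrib by (simp add: field_simps sum.distrib)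
  also have "\<dots> \<le> s_BLO l / (2 * p) + real l * s_BLO l"
    using sum_binomial_le_mult_s_BLO by simp
  finally show ?thesis
    by (simp add: algebra_simps)
qed

lemma exp_mult_power_le_one:
  fixes p :: real
  assumes "0 \<le> p" "p \<le> 1"
  shows "exp 1 * real k * p * (1 - p) ^ k \<le> 1"
proof -
  have "(1 - p) ^ k \<le> exp (- p) ^ k"
    using assms exp_ge_add_one_self[of "- p"] by (intro power_mono) auto
  also have "\<dots> = exp (- (real k * p))"
    by (simp add: exp_of_nat_mult[symmetric])
  finally have "exp 1 * real k * p * (1 - p) ^ k \<le> exp 1 * real k * p * exp (- (real k * p))"
    using assms by (intro mult_left_mono) auto
  also have "\<dots> = (real k * p) * exp (1 - real k * p)"
    by (simp add: exp_diff exp_minus field_simps)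
  also have "\<dots> \<le> exp (real k * p - 1) * exp (1 - real k * p)"
    using assms exp_ge_add_one_self[of "real k * p - 1"] by (intro mult_right_mono) auto
  also have "\<dots> = 1"
    by (simp flip: exp_add)
  finally show ?thesis .
qed

lemma level_cost_ge:
  fixes p :: real
  assumes "0 < p" "p < 1"
  shows "exp 1 * s_BLO l * real k / 2 \<le> inverse ((1 - p) ^ k) * block_sum l p"
proof -
  have pk: "0 < (1 - p) ^ k"
    using assms by simp
  have "exp 1 * real k \<le> inverse ((1 - p) ^ k) / p"
    using exp_mult_power_le_one[of p k] pk assms by (simp add: field_simps)
  then have "exp 1 * real k * (s_BLO l / 2) \<le> inverse ((1 - p) ^ k) / p * (s_BLO l / 2)"
    using s_BLO_nonneg by (intro mult_right_mono) auto
  also have "\<dots> = inverse ((1 - p) ^ k) * (s_BLO l / (2 * p))"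
    by simp
  also have "\<dots> \<le> inverse ((1 - p) ^ k) * block_sum l p"
    using s_BLO_div_le_block_sum[OF assms] pk by (intro mult_left_mono) auto
  finally show ?thesis
    by (simp add: ac_simps)
qed

lemma inverse_power_one_minus_le_exp: "inverse ((1 - 1 / (real k + 2)) ^ k) \<le> exp 1"
proof -
  have "inverse ((1 - 1 / (real k + 2)) ^ k) = (1 + 1 / (real k + 1)) ^ k"
    by (simp add: field_simps flip: power_inverse)
  also have "\<dots> \<le> exp (1 / (real k + 1)) ^ k"
    using exp_ge_add_one_self[of "1 / (real k + 1)"] by (intro power_mono) auto
  also have "\<dots> = exp (real k / (real k + 1))"
    by (simp flip: exp_of_nat_mult)
  also have "\<dots> \<le> exp 1"
    by simp
  finally show ?thesis .
qed

lemma level_cost_le: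
  "inverse ((1 - 1 / (real k + 2)) ^ k) * block_sum l (1 / (real k + 2))
     \<le> exp 1 * s_BLO l * (real k / 2 + 1 + real l)"
proof -
  define p where "p = 1 / (real k + 2)"
  have p: "0 < p" "p < 1" "p \<le> 1/2"
    unfolding p_def by (simp_all add: field_simps)
  have "0 \<le> s_BLO l / (2 * p)"
    using s_BLO_nonneg p(1) by simp
  also have "\<dots> \<le> block_sum l p"
    using s_BLO_div_le_block_sum[OF p(1,2)] .
  finally have "inverse ((1 - p) ^ k) * block_sum l p \<le> exp 1 * (s_BLO l * (1 / (2 * p) + real l))"
    using inverse_power_one_minus_le_exp[of k] block_sum_le[OF p(1,3)]
    unfolding p_def by (intro mult_mono) auto
  also have "\<dots> = exp 1 * s_BLO l * (real k / 2 + 1 + real l)"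
    unfolding p_def by (simp add: field_simps)
  finally show ?thesis
    unfolding p_def .
qed

lemma sum_lessThan_of_nat: "(\<Sum>m<L. real m) = real L * (real L - 1) / 2"
  by (induction L) (auto simp: field_simps)

lemma exp_runtime_ge:
  assumes "\<forall>m<n div l. 0 < p m \<and> p m < 1"
  shows "exp 1 * s_BLO l * real l * real (n div l) * (real (n div l) - 1) / 4 \<le> exp_runtime n l p"
proof -
  have "exp 1 * s_BLO l * real l * real (n div l) * (real (n div l) - 1) / 4
      = exp 1 * s_BLO l * real l / 2 * (\<Sum>m<n div l. real m)"
    by (simp add: sum_lessThan_of_nat)
  also have "\<dots> = (\<Sum>m<n div l. exp 1 * s_BLO l * real (m * l) / 2)"
    by (simp add: sum_distrib_left mult_ac)
  also have "\<dots> \<le> exp_runtime n l p"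
    unfolding exp_runtime_eq_block_sum using assms by (intro sum_mono level_cost_ge) auto
  finally show ?thesis .
qed

lemma exp_runtime_le:
  "exp_runtime n l (\<lambda>m. 1 / (real (m * l) + 2))
     \<le> exp 1 * s_BLO l * (real l * real (n div l) * (real (n div l) - 1) / 4
                          + real (n div l) * (real l + 1))"
proof -
  have "exp_runtime n l (\<lambda>m. 1 / (real (m * l) + 2))
      \<le> (\<Sum>m<n div l. exp 1 * s_BLO l * (real (m * l) / 2 + 1 + real l))"
    unfolding exp_runtime_eq_block_sum by (intro sum_mono level_cost_le)
  also have "\<dots> = exp 1 * s_BLO l * (real l / 2 * (\<Sum>m<n div l. real m) + real (n div l) * (real l + 1))"
    by (simp add: sum.distrib sum_distrib_left algebra_simps)
  also have "\<dots> = exp 1 * s_BLO l * (real l * real (n div l) * (real (n div l) - 1) / 4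
                                     + real (n div l) * (real l + 1))"
    by (simp add: sum_lessThan_of_nat)
  finally show ?thesis .
qed

lemma T_opt_ge: "exp 1 * s_BLO l * real l * real (n div l) * (real (n div l) - 1) / 4 \<le> T_opt n l"
  unfolding T_opt_def
proof (rule cInf_greatest)
  have "exp_runtime n l (\<lambda>_. 1 / 2) \<in> {exp_runtime n l p | p. \<forall>m<n div l. 0 < p m \<and> p m < 1}"
    by auto
  then show "{exp_runtime n l p | p. \<forall>m<n div l. 0 < p m \<and> p m < 1} \<noteq> {}"
    by blast
qed (blast intro: exp_runtime_ge)

lemma T_opt_le:
  "T_opt n l \<le> exp 1 * s_BLO l * (real l * real (n div l) * (real (n div l) - 1) / 4
                                  + real (n div l) * (real l + 1))"
proof -
  have rates: "0 < 1 / (real k + 2) \<and> 1 / (real k + 2) < 1" for k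
    by (simp add: field_simps)
  have "T_opt n l \<le> exp_runtime n l (\<lambda>m. 1 / (real (m * l) + 2))"
    unfolding T_opt_def
  proof (rule cInf_lower)
    show "bdd_below {exp_runtime n l p | p. \<forall>m<n div l. 0 < p m \<and> p m < 1}"
      by (rule bdd_belowI) (auto intro: exp_runtime_ge)
  qed (use rates in blast)
  also have "\<dots> \<le> exp 1 * s_BLO l * (real l * real (n div l) * (real (n div l) - 1) / 4
                                     + real (n div l) * (real l + 1))"
    by (rule exp_runtime_le)
  finally show ?thesis .
qed

lemma T_opt_ratio_bounds:
  assumes "l \<ge> 1" "l dvd n" "n > 0"
  defines "g \<equiv> exp 1 / 2 * (b_BLO l * 2 ^ l / real l) * real n ^ 2"
  shows "1 - real l / real n \<le> T_opt n l / g"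
    and "T_opt n l / g \<le> 1 + 7 * real l / real n"
proof -
  define L where "L = n div l"
  define s where "s = s_BLO l"
  have n: "n = L * l"
    using assms(2) unfolding L_def by simp
  with assms have L: "real L \<ge> 1"
    by (cases L) auto
  have s: "s \<ge> 1"
    using s_BLO_ge[of l] assms(1) unfolding s_def by linarith
  have "b_BLO l * 2 ^ l = s / 2"
    unfolding b_BLO_def s_def by (simp add: field_simps)
  then have g: "g = exp 1 * s * real l * real L ^ 2 / 4"
    unfolding g_def n using assms(1) by (simp add: field_simps power2_eq_square)
  have "g > 0"
    unfolding g using s L assms(1) by simp
  have l_div_n: "real l / real n = 1 / real L" "7 * real l / real n = 7 / real L"
    unfolding n using assms(1) by simp_all
  have "g * (1 - 1 / real L) = exp 1 * s * real l * real L * (real L - 1) / 4"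
    unfolding g using L by (simp add: field_simps power2_eq_square)
  also have "\<dots> \<le> T_opt n l"
    using T_opt_ge[of l n] unfolding s_def L_def .
  finally show "1 - real l / real n \<le> T_opt n l / g"
    unfolding l_div_n using \<open>g > 0\<close> by (simp add: pos_le_divide_eq mult.commute)
  have "T_opt n l \<le> exp 1 * s * (real l * real L * (real L - 1) / 4 + real L * (real l + 1))"
    using T_opt_le[of n l] unfolding s_def L_def .
  also have "\<dots> = g * (1 + 7 / real L) - exp 1 * s * real L * (real l - 1)"
    unfolding g using L by (simp add: field_simps power2_eq_square)
  also have "\<dots> \<le> g * (1 + 7 / real L)"
    using s L assms(1) by simp
  finally show "T_opt n l / g \<le> 1 + 7 * real l / real n"
    unfolding l_div_n using \<open>g > 0\<close> by (simp add: pos_divide_le_eq mult.commute)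
qed

theorem mainTheorem10:
  fixes n l :: "nat \<Rightarrow> nat"
  assumes "filterlim n at_top sequentially"
    and "\<And>k. l k \<ge> 1"
    and "\<And>k. l k dvd n k"
    and "(\<lambda>k. real (l k) / real (n k)) \<longlonglongrightarrow> 0"
  shows "(\<lambda>k. T_opt (n k) (l k)) \<sim>[sequentially]
         (\<lambda>k. exp 1 / 2 * (b_BLO (l k) * 2 ^ l k / real (l k)) * real (n k) ^ 2)"
proof (rule asymp_equivI')
  have n_pos: "eventually (\<lambda>k. n k > 0) sequentially"
    using eventually_compose_filterlim[OF eventually_gt_at_top assms(1)] .
  have lower: "(\<lambda>k. 1 - real (l k) / real (n k)) \<longlonglongrightarrow> 1"
    using tendsto_diff[OF tendsto_const assms(4), of 1] by simp
  have upper: "(\<lambda>k. 1 + 7 * real (l k) / real (n k)) \<longlonglongrightarrow> 1"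
    using tendsto_add[OF tendsto_const tendsto_mult[OF tendsto_const assms(4)], of 1 7] by simp
  show "(\<lambda>k. T_opt (n k) (l k) / (exp 1 / 2 * (b_BLO (l k) * 2 ^ l k / real (l k)) * real (n k) ^ 2))
      \<longlonglongrightarrow> 1" (is "?ratio \<longlonglongrightarrow> 1")
  proof (rule tendsto_sandwich[OF _ _ lower upper])
    show "eventually (\<lambda>k. 1 - real (l k) / real (n k) \<le> ?ratio k) sequentially"
      using n_pos by (rule eventually_mono) (rule T_opt_ratio_bounds(1)[OF assms(2,3)])
    show "eventually (\<lambda>k. ?ratio k \<le> 1 + 7 * real (l k) / real (n k)) sequentially"
      using n_pos by (rule eventually_mono) (rule T_opt_ratio_bounds(2)[OF assms(2,3)])
  qed
qed

end
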